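(* Let $\mathbf m>0$ be a real number, $\Gamma_1,\Gamma_2$ co-prime integers with $1<\Gamma_1<\Gamma_2$, $\mathbf m_i=\mathbf m\Gamma_i$ ($i=1,2$), let $1\le j\le K+1$ and $\mathbf X=\min\big(\mathbf m_2(1+\ddot n_{2,j}),\,\mathbf m_1(1+\ddot n_{1,j})\big)$. (a) For every real $\mathbf N$ with $0\le\mathbf N<\mathbf X$ and all real erroneous remainders $\tilde{\mathbf r}_1,\tilde{\mathbf r}_2$ of $\mathbf N$ whose errors satisfy $$-\frac{\sigma_j}{2}\le\frac{\Delta\mathbf r_1-\Delta\mathbf r_2}{\mathbf m}<\frac{\sigma_j}{2},$$ Algorithm 2 (real version, index $j$) returns $\hat n_1=n_1$, $\hat n_2=n_2$. In particular this holds whenever $|\Delta\mathbf r_i|\le\boldsymbol\tau$ for $i=1,2$ with $\boldsymbol\tau<\mathbf m\sigma_j/4$. (b) (Sharpness) For $\mathbf N=\mathbf X$ there exist real erroneous remainders whose errors satisfy the condition in (a), for which Algorithm 2 returns $(\hat n_1,\hat n_2)\ne(n_1,n_2)$.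
   Context: $|a|_b$ is the remainder of the integer $a$ modulo the positive integer $b$; $[x]=\lfloor x+1/2\rfloor$. For real $\mathbf N\ge0$: folding integers $n_i=\lfloor\mathbf N/\mathbf m_i\rfloor$ and real remainders $\mathbf r_i=\mathbf N-n_i\mathbf m_i\in[0,\mathbf m_i)$; erroneous remainders are reals $\tilde{\mathbf r}_i\in[0,\mathbf m_i)$ with errors $\Delta\mathbf r_i=\tilde{\mathbf r}_i-\mathbf r_i$. Euclidean sequence: $\sigma_{-1}=\Gamma_2$, $\sigma_0=\Gamma_1$, $\sigma_i=|\sigma_{i-2}|_{\sigma_{i-1}}$ for $i\ge1$; $K\ge0$ is the index with $\sigma_K>1$, $\sigma_{K+1}=1$. For $1\le n<\Gamma_1$, $S_{2,n}=\{|t\Gamma_2|_{\Gamma_1}:0\le t\le n\}$, $d_{2,n}$ = minimum distance between distinct elements of $S_{2,n}$; for $1\le n<\Gamma_2$, $S_{1,n}=\{|t\Gamma_1|_{\Gamma_2}:0\le t\le n\}$, $d_{1,n}$ likewise. $\ddot n_{2,j}=\max\{n:1\le n<\Gamma_1,\ d_{2,n}\ge\sigma_j\}$, $\ddot n_{1,j}=\max\{n:1\le n<\Gamma_2,\ d_{1,n}\ge\sigma_j\}$. $\bar\Gamma_{21}$ is the inverse of $\Gamma_2$ modulo $\Gamma_1$, $\bar\Gamma_{12}$ the inverse of $\Gamma_1$ modulo $\Gamma_2$. Algorithm 2, real version (index $j$, input $\tilde{\mathbf r}_1,\tilde{\mathbf r}_2$): compute $\mathbf q_{21}=(\tilde{\mathbf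 r}_1-\tilde{\mathbf r}_2)/\mathbf m$. (i) If $\mathbf q_{21}\ge\sigma_j/2$: if some $x\in S_{2,\ddot n_{2,j}}$ satisfies $-\sigma_j/2\le\mathbf q_{21}-x<\sigma_j/2$, let $s_2=x$; otherwise let $s_2$ be an element of $S_{2,\ddot n_{2,j}}$ at minimum distance from $\mathbf q_{21}$. Let $\hat n_2\in[0,\Gamma_1)$ with $\hat n_2\equiv s_2\bar\Gamma_{21}\pmod{\Gamma_1}$ and $\hat n_1=[(\hat n_2\mathbf m_2+\tilde{\mathbf r}_2-\tilde{\mathbf r}_1)/\mathbf m_1]$. (ii) If $\mathbf q_{21}<-\sigma_j/2$: if some $y\in S_{1,\ddot n_{1,j}}$ satisfies $-\sigma_j/2\le\mathbf q_{21}+y<\sigma_j/2$, let $s_1=y$; otherwise let $s_1$ be an element of $S_{1,\ddot n_{1,j}}$ at minimum distance from $-\mathbf q_{21}$. Let $\hat n_1\in[0,\Gamma_2)$ with $\hat n_1\equiv s_1\bar\Gamma_{12}\pmod{\Gamma_2}$ and $\hat n_2=[(\hat n_1\mathbf m_1+\tilde{\mathbf r}_1-\tilde{\mathbf r}_2)/\mathbf m_2]$. (iii) If $-\sigma_j/2\le\mathbf q_{21}<\sigma_j/2$: $\hat n_1=\hat n_2=0$. *)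

theory Defs
  imports Complex_Main
begin

text \<open>Euclidean sequence.  eseq G1 G2 k = sigma_(k-1), i.e.
  eseq 0 = sigma_(-1) = Gamma_2, eseq 1 = sigma_0 = Gamma_1,
  sigma_i = sigma_(i-2) mod sigma_(i-1).\<close>
fun eseq :: "nat \<Rightarrow> nat \<Rightarrow> nat \<Rightarrow> nat" where
  "eseq G1 G2 0 = G2"
| "eseq G1 G2 (Suc 0) = G1"
| "eseq G1 G2 (Suc (Suc i)) = eseq G1 G2 i mod eseq G1 G2 (Suc i)"

definition sigma :: "nat \<Rightarrow> nat \<Rightarrow> nat \<Rightarrow> nat" where
  "sigma G1 G2 i = eseq G1 G2 (Suc i)"

definition Kidx :: "nat \<Rightarrow> nat \<Rightarrow> nat" where
  "Kidx G1 G2 = (THE K. sigma G1 G2 K > 1 \<and> sigma G1 G2 (Suc K) = 1)"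

text \<open>Sset a b n = { |t a|_b : 0 \<le> t \<le> n }.  So S_(2,n) = Sset Gamma_2 Gamma_1 n
  and S_(1,n) = Sset Gamma_1 Gamma_2 n.\<close>
definition Sset :: "nat \<Rightarrow> nat \<Rightarrow> nat \<Rightarrow> nat set" where
  "Sset a b n = {(t * a) mod b | t. t \<le> n}"

definition dmin :: "nat set \<Rightarrow> nat" where
  "dmin A = Min {nat \<bar>int x - int y\<bar> | x y. x \<in> A \<and> y \<in> A \<and> x \<noteq> y}"

text \<open>nddot a b s = max { n : 1 \<le> n < b, d(Sset a b n) \<ge> s }.
  ddot n_(2,j) = nddot Gamma_2 Gamma_1 sigma_j, ddot n_(1,j) = nddot Gamma_1 Gamma_2 sigma_j.\<close>
definition nddot :: "nat \<Rightarrow> nat \<Rightarrow> nat \<Rightarrow> nat" where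
  "nddot a b s = Max {n. 1 \<le> n \<and> n < b \<and> dmin (Sset a b n) \<ge> s}"

definition modinv :: "nat \<Rightarrow> nat \<Rightarrow> nat" where
  "modinv a b = (THE x. x < b \<and> (a * x) mod b = 1)"

definition rnd :: "real \<Rightarrow> int" where
  "rnd x = \<lfloor>x + 1/2\<rfloor>"

text \<open>Set of all possible outputs (n1hat, n2hat) of Algorithm 2 (real version, index j)
  on input r1t, r2t; the set accounts for the free choice among equidistant
  nearest elements.\<close>
definition alg2_outputs :: "real \<Rightarrow> nat \<Rightarrow> nat \<Rightarrow> nat \<Rightarrow> real \<Rightarrow> real \<Rightarrow> (int \<times> int) set" where
  "alg2_outputs m G1 G2 j r1t r2t =
    (let q = (r1t - r2t) / m;
         s = real (sigma G1 G2 j);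
         A2 = Sset G2 G1 (nddot G2 G1 (sigma G1 G2 j));
         A1 = Sset G1 G2 (nddot G1 G2 (sigma G1 G2 j));
         m1 = m * real G1;
         m2 = m * real G2
     in {(n1h, n2h).
          (s / 2 \<le> q \<and>
            (\<exists>s2\<in>A2.
               (if (\<exists>x\<in>A2. - s / 2 \<le> q - real x \<and> q - real x < s / 2)
                then - s / 2 \<le> q - real s2 \<and> q - real s2 < s / 2
                else (\<forall>x\<in>A2. \<bar>q - real s2\<bar> \<le> \<bar>q - real x\<bar>)) \<and>
               n2h = int ((s2 * modinv G2 G1) mod G1) \<and>
               n1h = rnd ((real_of_int n2h * m2 + r2t - r1t) / m1)))
        \<or> (q < - s / 2 \<and>
            (\<exists>s1\<in>A1.
               (if (\<exists>y\<in>A1. - s / 2 \<le> q + real y \<and> q + real y < s / 2)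
                then - s / 2 \<le> q + real s1 \<and> q + real s1 < s / 2
                else (\<forall>y\<in>A1. \<bar>- q - real s1\<bar> \<le> \<bar>- q - real y\<bar>)) \<and>
               n1h = int ((s1 * modinv G1 G2) mod G2) \<and>
               n2h = rnd ((real_of_int n1h * m1 + r1t - r2t) / m2)))
        \<or> (- s / 2 \<le> q \<and> q < s / 2 \<and> n1h = 0 \<and> n2h = 0)})"

end

theory Submission
  imports Defs "HOL-Number_Theory.Cong"
begin

text \<open>Write \<open>N = n\<^sub>i m\<^sub>i + r\<^sub>i\<close> and \<open>k = n\<^sub>2 \<Gamma>\<^sub>2 - n\<^sub>1 \<Gamma>\<^sub>1\<close>. Then
  \<open>q = (r\<^sub>1' - r\<^sub>2') / m = k + e\<close>, where \<open>e \<in> [-\<sigma>\<^sub>j/2, \<sigma>\<^sub>j/2)\<close> is the normalised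
  difference of the errors, and \<open>-\<Gamma>\<^sub>2 < k < \<Gamma>\<^sub>1\<close>. For \<open>N < X\<close> each folding integer is at
  most its bound \<open>n2dd\<close> resp. \<open>n1dd\<close>, so a positive \<open>k\<close> is the element
  \<open>|n\<^sub>2 \<Gamma>\<^sub>2|\<^sub>\<Gamma>\<^sub>1\<close> of \<open>S2\<close>, and a negative one gives \<open>-k = |n\<^sub>1 \<Gamma>\<^sub>1|\<^sub>\<Gamma>\<^sub>2 \<in> S1\<close>.
  Both sets contain 0 and are \<open>\<sigma>\<^sub>j\<close>-separated, so \<open>q\<close> falls into the right branch of the
  algorithm and \<open>k\<close> is the only element of the window around \<open>q\<close>; the modular inverse
  turns it back into \<open>n\<^sub>2\<close> (resp. \<open>n\<^sub>1\<close>), and the other folding integer is recovered by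
  rounding because \<open>|e| < \<Gamma>\<^sub>i / 2\<close>. At \<open>N = X\<close> one folding integer exceeds its bound,
  a value no output of the algorithm can take, even for error-free remainders.\<close>

section \<open>The Euclidean sequence\<close>

lemma sigma_0 [simp]: "sigma G1 G2 0 = G1"
  by (simp add: sigma_def)

lemma sigma_1 [simp]: "sigma G1 G2 (Suc 0) = G2 mod G1"
  by (simp add: sigma_def)

lemma sigma_Suc_Suc: "sigma G1 G2 (Suc (Suc i)) = sigma G1 G2 i mod sigma G1 G2 (Suc i)"
  by (simp add: sigma_def)

lemma coprime_sigma_Suc:
  assumes "coprime G1 G2"
  shows "coprime (sigma G1 G2 i) (sigma G1 G2 (Suc i))"
proof (induction i rule: nat_less_induct)
  case (1 i)
  show ?case
  proof (cases i)
    case 0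
    then show ?thesis using assms by (cases "G1 = 0") (auto simp: coprime_commute)
  next
    case (Suc i')
    have "coprime (sigma G1 G2 i') (sigma G1 G2 i)" using 1 Suc by simp
    then show ?thesis
      using Suc by (cases "sigma G1 G2 i = 0") (auto simp: sigma_Suc_Suc coprime_commute)
  qed
qed

lemma sigma_Suc_less: "0 < sigma G1 G2 i \<Longrightarrow> sigma G1 G2 (Suc i) < sigma G1 G2 i"
  by (cases i) (simp_all add: sigma_Suc_Suc)

lemma sigma_Suc_le_1:
  assumes "coprime G1 G2" "sigma G1 G2 i \<le> 1"
  shows "sigma G1 G2 (Suc i) \<le> 1"
proof (cases "sigma G1 G2 i = 0")
  case True
  then show ?thesis using coprime_sigma_Suc[OF assms(1), of i] by simp
next
  case False
  then show ?thesis using sigma_Suc_less[of G1 G2 i] assms(2) by simp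
qed

lemma sigma_le_1_mono:
  assumes "coprime G1 G2" "sigma G1 G2 i \<le> 1" "i \<le> k"
  shows "sigma G1 G2 k \<le> 1"
  using assms(3) by (induction k rule: dec_induct) (use assms(2) sigma_Suc_le_1[OF assms(1)] in auto)

lemma sigma_antimono:
  assumes "i \<le> k" "\<forall>l<k. 0 < sigma G1 G2 l"
  shows "sigma G1 G2 k \<le> sigma G1 G2 i"
  using assms by (induction k rule: dec_induct) (auto dest!: sigma_Suc_less[of G1 G2])

lemma sigma_Kidx:
  assumes "coprime G1 G2" "1 < G1"
  shows "1 < sigma G1 G2 (Kidx G1 G2)" "sigma G1 G2 (Suc (Kidx G1 G2)) = 1"
proof -
  have "\<exists>i. sigma G1 G2 i \<le> 1"
  proof (rule ccontr)
    assume "\<nexists>i. sigma G1 G2 i \<le> 1"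
    then have gt_1: "1 < sigma G1 G2 i" for i
      by (simp add: not_le)
    have "sigma G1 G2 i + i \<le> G1" for i
    proof (induction i)
      case (Suc i)
      then show ?case using sigma_Suc_less[of G1 G2 i] gt_1[of i] by simp
    qed simp
    from this[of G1] gt_1[of G1] show False by simp
  qed
  then obtain K where K: "1 < sigma G1 G2 K" "sigma G1 G2 (Suc K) \<le> 1"
    using exists_least_lemma[where P = "\<lambda>i. sigma G1 G2 i \<le> 1"] assms(2) by force
  have K1: "sigma G1 G2 (Suc K) = 1"
    using K coprime_sigma_Suc[OF assms(1), of K] by (cases "sigma G1 G2 (Suc K)") auto
  have "K' = K" if "1 < sigma G1 G2 K'" "sigma G1 G2 (Suc K') = 1" for K'
    using sigma_le_1_mono[OF assms(1), of "Suc K" K'] sigma_le_1_mono[OF assms(1), of "Suc K'" K]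
      that K K1 by (cases K' K rule: linorder_cases) auto
  then have "Kidx G1 G2 = K"
    unfolding Kidx_def using K(1) K1 by blast
  then show "1 < sigma G1 G2 (Kidx G1 G2)" "sigma G1 G2 (Suc (Kidx G1 G2)) = 1"
    using K(1) K1 by simp_all
qed

lemma sigma_pos_upto_Kidx:
  assumes "coprime G1 G2" "1 < G1" "i \<le> Suc (Kidx G1 G2)"
  shows "0 < sigma G1 G2 i"
proof (rule ccontr)
  assume "\<not> 0 < sigma G1 G2 i"
  then have "i \<le> Kidx G1 G2"
    using assms(3) sigma_Kidx(2)[OF assms(1,2)] by (cases "i = Suc (Kidx G1 G2)") auto
  then show False
    using sigma_le_1_mono[OF assms(1), of i] \<open>\<not> 0 < sigma G1 G2 i\<close> sigma_Kidx(1)[OF assms(1,2)]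
    by fastforce
qed

lemma sigma_bounds:
  assumes "coprime G1 G2" "1 < G1" "1 \<le> j" "j \<le> Kidx G1 G2 + 1"
  shows "1 \<le> sigma G1 G2 j" "sigma G1 G2 j \<le> G2 mod G1"
proof -
  have "\<forall>l<j. 0 < sigma G1 G2 l" "0 < sigma G1 G2 j"
    using sigma_pos_upto_Kidx[OF assms(1,2)] assms(4) by auto
  then show "1 \<le> sigma G1 G2 j" "sigma G1 G2 j \<le> G2 mod G1"
    using sigma_antimono[of 1 j G1 G2] assms(3) by auto
qed

section \<open>Modular inverses and the sets \<open>S\<close>\<close>

lemma modinv_inverse:
  assumes "coprime a b" "1 < b"
  shows "modinv a b < b" "a * modinv a b mod b = 1"
proof -
  obtain x where x: "x < b" "[a * x = 1] (mod b)"
    using coprime_iff_invertible'_nat[of b a] assms by auto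
  have "y = x" if "y < b" "a * y mod b = 1" for y
  proof -
    have "[a * y = a * x] (mod b)" using x(2) that(2) assms(2) by (simp add: cong_def)
    then show "y = x" using cong_mult_lcancel_nat[OF assms(1)] cong_less_modulus_unique_nat that(1) x(1)
      by blast
  qed
  moreover have "a * x mod b = 1" using x(2) assms(2) by (simp add: cong_def)
  ultimately have "modinv a b = x" unfolding modinv_def using x(1) by blast
  then show "modinv a b < b" "a * modinv a b mod b = 1" using x(1) \<open>a * x mod b = 1\<close> by simp_all
qed

lemma mod_mult_modinv:
  assumes "coprime a b" "1 < b" "t < b"
  shows "(t * a mod b) * modinv a b mod b = t"
proof -
  have "(t * a mod b) * modinv a b mod b = t * (a * modinv a b mod b) mod b"
    by (simp add: mod_mult_left_eq mod_mult_right_eq mult.assoc)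
  then show ?thesis using modinv_inverse(2)[OF assms(1,2)] assms(3) by simp
qed

lemma Sset_eq_image: "Sset a b n = (\<lambda>t. t * a mod b) ` {..n}"
  unfolding Sset_def by auto

lemma finite_Sset [simp]: "finite (Sset a b n)"
  by (simp add: Sset_eq_image)

lemma zero_in_Sset [simp]: "0 \<in> Sset a b n"
  unfolding Sset_def by force

lemma dmin_le:
  assumes "finite A" "x \<in> A" "y \<in> A" "x \<noteq> y"
  shows "dmin A \<le> nat \<bar>int x - int y\<bar>"
proof -
  let ?D = "{nat \<bar>int x - int y\<bar> | x y. x \<in> A \<and> y \<in> A \<and> x \<noteq> y}"
  have "?D \<subseteq> (\<lambda>(x, y). nat \<bar>int x - int y\<bar>) ` (A \<times> A)" by auto
  then have "finite ?D" using assms(1) by (meson finite_SigmaI finite_imageI finite_subset)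
  then show ?thesis unfolding dmin_def using assms(2-4) by (intro Min_le) blast+
qed

lemma Sset_1: "Sset a b 1 = {0, a mod b}"
proof -
  have "{..1::nat} = {0, 1}" by auto
  then show ?thesis unfolding Sset_eq_image by simp
qed

lemma dmin_Sset_1:
  assumes "0 < a mod b"
  shows "dmin (Sset a b 1) = a mod b"
proof -
  have "{nat \<bar>int x - int y\<bar> | x y. x \<in> {0, a mod b} \<and> y \<in> {0, a mod b} \<and> x \<noteq> y} = {a mod b}"
    using assms by force
  then show ?thesis unfolding dmin_def Sset_1 by simp
qed

lemma nddot_bounds:
  assumes "0 < a mod b" "s \<le> a mod b" "1 < b"
  shows "1 \<le> nddot a b s" "nddot a b s < b" "s \<le> dmin (Sset a b (nddot a b s))"
proof -
  let ?M = "{n. 1 \<le> n \<and> n < b \<and> s \<le> dmin (Sset a b n)}"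
  have "1 \<in> ?M" using assms dmin_Sset_1[OF assms(1)] by simp
  moreover have "finite ?M" by (rule finite_subset[of _ "{..<b}"]) auto
  ultimately have "nddot a b s \<in> ?M" unfolding nddot_def by (intro Max_in) auto
  then show "1 \<le> nddot a b s" "nddot a b s < b" "s \<le> dmin (Sset a b (nddot a b s))" by simp_all
qed

lemma Sset_nddot_separated:
  assumes "0 < a mod b" "s \<le> a mod b" "1 < b"
    and "x \<in> Sset a b (nddot a b s)" "y \<in> Sset a b (nddot a b s)" "x \<noteq> y"
  shows "real s \<le> \<bar>real x - real y\<bar>"
  using nddot_bounds(3)[OF assms(1-3)] dmin_le[OF finite_Sset assms(4-6)] by linarith

section \<open>Folding arithmetic\<close>

lemma nat_mult_diff_eq_mod:
  assumes "0 \<le> int t * int a - int u * int b" "int t * int a - int u * int b < int b"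
  shows "nat (int t * int a - int u * int b) = t * a mod b"
proof -
  let ?k = "int t * int a - int u * int b"
  have "int (t * a mod b) = (?k + int u * int b) mod int b"
    by (simp add: zmod_int)
  also have "\<dots> = ?k"
    using mod_mult_self1[of ?k "int u" "int b"] assms by simp
  finally show ?thesis by simp
qed

lemma rnd_eqI: "real_of_int z - 1/2 \<le> x \<Longrightarrow> x < real_of_int z + 1/2 \<Longrightarrow> rnd x = z"
  unfolding rnd_def by (intro floor_unique) simp_all

lemma rescaled_difference:
  fixes m a b e x y :: real
  assumes "0 < m" "0 < a" "(x - y) / m = real u * b - real t * a + e"
  shows "(real u * (m * b) + y - x) / (m * a) = real t - e / a"
proof -
  have "x - y = m * (real u * b - real t * a + e)"
    using assms(1,3) by (simp add: field_simps)
  then have "real u * (m * b) + y - x = m * (real t * a - e)"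
    by (simp add: algebra_simps)
  also have "\<dots> = (m * a) * (real t - e / a)"
    using assms(2) by (simp add: field_simps)
  finally show ?thesis
    using assms(1,2) by simp
qed

lemma floor_remainder_bounds:
  fixes N M :: real
  assumes "0 < M"
  shows "0 \<le> N - of_int \<lfloor>N / M\<rfloor> * M" "N - of_int \<lfloor>N / M\<rfloor> * M < M"
proof -
  have "of_int \<lfloor>N / M\<rfloor> * M \<le> N"
    using assms of_int_floor_le[of "N / M"] pos_le_divide_eq by blast
  moreover have "N < (of_int \<lfloor>N / M\<rfloor> + 1) * M"
    using assms real_of_int_floor_add_one_gt[of "N / M"] pos_divide_less_eq by blast
  ultimately show "0 \<le> N - of_int \<lfloor>N / M\<rfloor> * M" "N - of_int \<lfloor>N / M\<rfloor> * M < M"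
    by (simp_all add: algebra_simps)
qed

lemma floor_div_eq_nat_le:
  fixes N M :: real
  assumes "0 < M" "0 \<le> N" "N < M * (1 + real d)"
  obtains t where "\<lfloor>N / M\<rfloor> = int t" "t \<le> d"
proof -
  have "0 \<le> N / M" "N / M < 1 + real d"
    using assms by (simp_all add: pos_divide_less_eq mult.commute)
  then have "0 \<le> \<lfloor>N / M\<rfloor>" "\<lfloor>N / M\<rfloor> \<le> int d"
    by linarith+
  then show thesis
    using that[of "nat \<lfloor>N / M\<rfloor>"] by simp
qed

lemma diff_div_in_window:
  fixes m s \<tau> d1 d2 :: real
  assumes "0 < m" "\<bar>d1\<bar> \<le> \<tau>" "\<bar>d2\<bar> \<le> \<tau>" "\<tau> < m * s / 4"
  shows "- s / 2 \<le> (d1 - d2) / m" "(d1 - d2) / m < s / 2"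
proof -
  have "- (m * s / 2) < d1 - d2" "d1 - d2 < m * s / 2"
    using assms(2-4) by linarith+
  then show "- s / 2 \<le> (d1 - d2) / m" "(d1 - d2) / m < s / 2"
    using assms(1) by (simp_all add: field_simps)
qed

section \<open>Algorithm 2\<close>

text \<open>The selection step of Algorithm 2, with offsets \<open>w y = q - y\<close> in case (i)
  and \<open>w y = q + y\<close> in case (ii).\<close>

definition window_or_nearest :: "nat set \<Rightarrow> real \<Rightarrow> (nat \<Rightarrow> real) \<Rightarrow> nat \<Rightarrow> bool" where
  "window_or_nearest A s w x \<longleftrightarrow> x \<in> A \<and>
     (if \<exists>y\<in>A. - s / 2 \<le> w y \<and> w y < s / 2 then - s / 2 \<le> w x \<and> w x < s / 2
      else (\<forall>y\<in>A. \<bar>w x\<bar> \<le> \<bar>w y\<bar>))"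

lemma window_or_nearest_exists:
  assumes "finite A" "A \<noteq> {}"
  shows "\<exists>x. window_or_nearest A s w x"
proof (cases "\<exists>y\<in>A. - s / 2 \<le> w y \<and> w y < s / 2")
  case True
  then obtain y where "y \<in> A" "- s / 2 \<le> w y" "w y < s / 2" by blast
  then have "window_or_nearest A s w y"
    unfolding window_or_nearest_def by auto
  then show ?thesis ..
next
  case False
  let ?x = "arg_min_on (\<lambda>y. \<bar>w y\<bar>) A"
  have "?x \<in> A"
    by (rule arg_min_if_finite(1)[OF assms])
  moreover have "\<bar>w ?x\<bar> \<le> \<bar>w y\<bar>" if "y \<in> A" for y
    using arg_min_least[OF assms that] .
  ultimately have "window_or_nearest A s w ?x"
    unfolding window_or_nearest_def if_not_P[OF False] by blast
  then show ?thesis ..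
qed

lemma window_or_nearest_unique:
  assumes separated: "\<And>x y. x \<in> A \<Longrightarrow> y \<in> A \<Longrightarrow> x \<noteq> y \<Longrightarrow> s \<le> \<bar>w x - w y\<bar>"
    and k: "k \<in> A" "- s / 2 \<le> w k" "w k < s / 2"
  shows "window_or_nearest A s w x \<longleftrightarrow> x = k"
proof
  assume "window_or_nearest A s w x"
  then have "x \<in> A" "- s / 2 \<le> w x" "w x < s / 2"
    using k unfolding window_or_nearest_def by (metis (no_types, lifting))+
  then have "\<bar>w x - w k\<bar> < s" using k by linarith
  then show "x = k" using separated[OF \<open>x \<in> A\<close> k(1)] by linarith
next
  assume "x = k"
  then show "window_or_nearest A s w x"
    unfolding window_or_nearest_def using k by auto
qed

locale two_moduli =
  fixes m :: real and G1 G2 j :: nat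
  assumes m_pos: "0 < m" and coprime: "coprime G1 G2"
    and G1_gt_1: "1 < G1" and G1_less_G2: "G1 < G2"
    and j_ge_1: "1 \<le> j" and j_le_Kidx: "j \<le> Kidx G1 G2 + 1"
begin

abbreviation "\<sigma> \<equiv> sigma G1 G2 j"
abbreviation "n2dd \<equiv> nddot G2 G1 \<sigma>"
abbreviation "n1dd \<equiv> nddot G1 G2 \<sigma>"
abbreviation "S2 \<equiv> Sset G2 G1 n2dd"
abbreviation "S1 \<equiv> Sset G1 G2 n1dd"

lemma G2_gt_1: "1 < G2"
  using G1_gt_1 G1_less_G2 by simp

lemma sigma_ge_1: "1 \<le> \<sigma>"
  using sigma_bounds(1)[OF coprime G1_gt_1 j_ge_1 j_le_Kidx] .

lemma sigma_le_G2_mod_G1: "\<sigma> \<le> G2 mod G1"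
  using sigma_bounds(2)[OF coprime G1_gt_1 j_ge_1 j_le_Kidx] .

lemma sigma_less_G1: "\<sigma> < G1"
  using sigma_le_G2_mod_G1 mod_less_divisor[of G1 G2] G1_gt_1 by linarith

lemma G2_mod_G1_pos: "0 < G2 mod G1"
  using sigma_ge_1 sigma_le_G2_mod_G1 by linarith

lemma G1_mod_G2_pos: "0 < G1 mod G2"
  using G1_gt_1 G1_less_G2 by simp

lemma sigma_le_G1_mod_G2: "\<sigma> \<le> G1 mod G2"
  using sigma_less_G1 G1_less_G2 by simp

lemma n2dd_bounds: "1 \<le> n2dd" "n2dd < G1"
  using nddot_bounds(1,2)[OF G2_mod_G1_pos sigma_le_G2_mod_G1 G1_gt_1] .

lemma n1dd_bounds: "1 \<le> n1dd" "n1dd < G2"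
  using nddot_bounds(1,2)[OF G1_mod_G2_pos sigma_le_G1_mod_G2 G2_gt_1] .

lemma S2_separated: "x \<in> S2 \<Longrightarrow> y \<in> S2 \<Longrightarrow> x \<noteq> y \<Longrightarrow> real \<sigma> \<le> \<bar>real x - real y\<bar>"
  using Sset_nddot_separated[OF G2_mod_G1_pos sigma_le_G2_mod_G1 G1_gt_1] .

lemma S1_separated: "x \<in> S1 \<Longrightarrow> y \<in> S1 \<Longrightarrow> x \<noteq> y \<Longrightarrow> real \<sigma> \<le> \<bar>real x - real y\<bar>"
  using Sset_nddot_separated[OF G1_mod_G2_pos sigma_le_G1_mod_G2 G2_gt_1] .

lemma mem_alg2_outputs:
  fixes r1t r2t :: real
  defines "q \<equiv> (r1t - r2t) / m"
  shows "(a, b) \<in> alg2_outputs m G1 G2 j r1t r2t \<longleftrightarrow>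
    (real \<sigma> / 2 \<le> q \<and> (\<exists>x. window_or_nearest S2 \<sigma> (\<lambda>y. q - real y) x \<and>
        b = int (x * modinv G2 G1 mod G1) \<and>
        a = rnd ((real_of_int b * (m * real G2) + r2t - r1t) / (m * real G1))))
    \<or> (q < - real \<sigma> / 2 \<and> (\<exists>x. window_or_nearest S1 \<sigma> (\<lambda>y. q + real y) x \<and>
        a = int (x * modinv G1 G2 mod G2) \<and>
        b = rnd ((real_of_int a * (m * real G1) + r1t - r2t) / (m * real G2))))
    \<or> (- real \<sigma> / 2 \<le> q \<and> q < real \<sigma> / 2 \<and> a = 0 \<and> b = 0)"
  unfolding alg2_outputs_def window_or_nearest_def Let_def q_def
  by (simp only: mem_Collect_eq case_prod_conv abs_minus_commute[of "- _"]
      minus_diff_eq diff_minus_eq_add add.commute[of "real _"]) blast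

lemma alg2_outputs_nonempty: "alg2_outputs m G1 G2 j r1t r2t \<noteq> {}"
proof -
  let ?q = "(r1t - r2t) / m"
  have "Sset a b n \<noteq> {}" for a b n
    using zero_in_Sset by blast
  then obtain x2 x1 where "window_or_nearest S2 \<sigma> (\<lambda>y. ?q - real y) x2"
    and "window_or_nearest S1 \<sigma> (\<lambda>y. ?q + real y) x1"
    using window_or_nearest_exists finite_Sset by metis
  then have "\<exists>a b. (a, b) \<in> alg2_outputs m G1 G2 j r1t r2t"
    unfolding mem_alg2_outputs by (cases "real \<sigma> / 2 \<le> ?q"; cases "?q < - real \<sigma> / 2") auto
  then show ?thesis by blast
qed

lemma alg2_outputs_snd_le:
  assumes "- real \<sigma> / 2 \<le> (r1t - r2t) / m" "(a, b) \<in> alg2_outputs m G1 G2 j r1t r2t"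
  shows "b \<le> int n2dd"
proof -
  have "b = 0 \<or> (\<exists>x\<in>S2. b = int (x * modinv G2 G1 mod G1))"
    using assms unfolding mem_alg2_outputs window_or_nearest_def by auto
  moreover have "x * modinv G2 G1 mod G1 \<le> n2dd" if "x \<in> S2" for x
  proof -
    obtain t where "t \<le> n2dd" "x = t * G2 mod G1"
      using \<open>x \<in> S2\<close> unfolding Sset_def by blast
    then show ?thesis
      using mod_mult_modinv[of G2 G1 t] coprime G1_gt_1 n2dd_bounds(2) by (simp add: coprime_commute)
  qed
  ultimately show ?thesis by auto
qed

lemma alg2_outputs_fst_le:
  assumes "(r1t - r2t) / m < real \<sigma> / 2" "(a, b) \<in> alg2_outputs m G1 G2 j r1t r2t"
  shows "a \<le> int n1dd"
proof -
  have "a = 0 \<or> (\<exists>x\<in>S1. a = int (x * modinv G1 G2 mod G2))"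
    using assms unfolding mem_alg2_outputs window_or_nearest_def by auto
  moreover have "x * modinv G1 G2 mod G2 \<le> n1dd" if "x \<in> S1" for x
  proof -
    obtain t where "t \<le> n1dd" "x = t * G1 mod G2"
      using \<open>x \<in> S1\<close> unfolding Sset_def by blast
    then show ?thesis
      using mod_mult_modinv[of G1 G2 t] coprime G2_gt_1 n1dd_bounds(2) by simp
  qed
  ultimately show ?thesis by auto
qed

lemma alg2_outputs_middle:
  assumes "- real \<sigma> / 2 \<le> (r1t - r2t) / m" "(r1t - r2t) / m < real \<sigma> / 2"
  shows "alg2_outputs m G1 G2 j r1t r2t = {(0, 0)}"
  using assms by (auto simp: mem_alg2_outputs)

lemma mem_alg2_outputs_upper:
  fixes r1t r2t :: real
  defines "q \<equiv> (r1t - r2t) / m"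
  assumes "real \<sigma> / 2 \<le> q"
  shows "(a, b) \<in> alg2_outputs m G1 G2 j r1t r2t \<longleftrightarrow>
    (\<exists>x. window_or_nearest S2 \<sigma> (\<lambda>y. q - real y) x \<and> b = int (x * modinv G2 G1 mod G1) \<and>
         a = rnd ((real_of_int b * (m * real G2) + r2t - r1t) / (m * real G1)))"
proof -
  have "\<not> q < - real \<sigma> / 2" "\<not> q < real \<sigma> / 2"
    using assms(2) by linarith+
  then show ?thesis
    unfolding mem_alg2_outputs q_def[symmetric] by (simp only: assms(2) simp_thms)
qed

lemma mem_alg2_outputs_lower:
  fixes r1t r2t :: real
  defines "q \<equiv> (r1t - r2t) / m"
  assumes "q < - real \<sigma> / 2"
  shows "(a, b) \<in> alg2_outputs m G1 G2 j r1t r2t \<longleftrightarrow>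
    (\<exists>x. window_or_nearest S1 \<sigma> (\<lambda>y. q + real y) x \<and> a = int (x * modinv G1 G2 mod G2) \<and>
         b = rnd ((real_of_int a * (m * real G1) + r1t - r2t) / (m * real G2)))"
proof -
  have "\<not> real \<sigma> / 2 \<le> q" "\<not> - real \<sigma> / 2 \<le> q"
    using assms(2) by linarith+
  then show ?thesis
    unfolding mem_alg2_outputs q_def[symmetric] by (simp only: assms(2) simp_thms)
qed

lemma alg2_outputs_upper:
  fixes r1t r2t :: real
  defines "q \<equiv> (r1t - r2t) / m"
  assumes "real \<sigma> / 2 \<le> q" "k \<in> S2" "- real \<sigma> / 2 \<le> q - real k" "q - real k < real \<sigma> / 2"
  shows "alg2_outputs m G1 G2 j r1t r2t =
    {(rnd ((real (k * modinv G2 G1 mod G1) * (m * real G2) + r2t - r1t) / (m * real G1)),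
      int (k * modinv G2 G1 mod G1))}"
proof -
  have "window_or_nearest S2 \<sigma> (\<lambda>y. q - real y) x \<longleftrightarrow> x = k" for x
    using window_or_nearest_unique[of S2 \<sigma> "\<lambda>y. q - real y" k x] S2_separated assms(3-5)
    by (simp add: abs_minus_commute)
  then show ?thesis
    using mem_alg2_outputs_upper[OF assms(2)[unfolded q_def]] unfolding q_def by auto
qed

lemma alg2_outputs_lower:
  fixes r1t r2t :: real
  defines "q \<equiv> (r1t - r2t) / m"
  assumes "q < - real \<sigma> / 2" "k \<in> S1" "- real \<sigma> / 2 \<le> q + real k" "q + real k < real \<sigma> / 2"
  shows "alg2_outputs m G1 G2 j r1t r2t =
    {(int (k * modinv G1 G2 mod G2),
      rnd ((real (k * modinv G1 G2 mod G2) * (m * real G1) + r1t - r2t) / (m * real G2)))}"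
proof -
  have "window_or_nearest S1 \<sigma> (\<lambda>y. q + real y) x \<longleftrightarrow> x = k" for x
    using window_or_nearest_unique[of S1 \<sigma> "\<lambda>y. q + real y" k x] S1_separated assms(3-5)
    by simp
  then show ?thesis
    using mem_alg2_outputs_lower[OF assms(2)[unfolded q_def]] unfolding q_def by auto
qed

section \<open>Correctness below \<open>X\<close> and failure at \<open>X\<close>\<close>

lemma alg2_outputs_decode_upper:
  assumes k: "int t2 * int G2 - int t1 * int G1 = k" "0 < k" "k < int G1" and t2: "t2 \<le> n2dd"
    and q: "(r1t - r2t) / m = real_of_int k + e" and e: "- real \<sigma> / 2 \<le> e" "e < real \<sigma> / 2"
  shows "alg2_outputs m G1 G2 j r1t r2t = {(int t1, int t2)}"
proof -
  have "nat k = t2 * G2 mod G1"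
    using nat_mult_diff_eq_mod[of t2 G2 t1 G1] k by simp
  then have kS2: "nat k \<in> S2"
    using t2 unfolding Sset_def by blast
  have k_real: "real (nat k) = real_of_int k"
    using k(2) by simp
  have k_eq: "real_of_int k = real t2 * real G2 - real t1 * real G1"
    using k(1) by (metis of_int_diff of_int_mult of_int_of_nat_eq)
  have "real \<sigma> \<le> real (nat k)"
    using S2_separated[OF kS2 zero_in_Sset] k(2) by simp
  then have "real \<sigma> / 2 \<le> (r1t - r2t) / m" "- real \<sigma> / 2 \<le> (r1t - r2t) / m - real (nat k)"
    "(r1t - r2t) / m - real (nat k) < real \<sigma> / 2"
    using q e k_real by linarith+
  note alg2_outputs_upper[OF this(1) kS2 this(2,3)]
  moreover have "nat k * modinv G2 G1 mod G1 = t2"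
    using \<open>nat k = t2 * G2 mod G1\<close> mod_mult_modinv[of G2 G1 t2] coprime G1_gt_1 t2 n2dd_bounds(2)
    by (simp add: coprime_commute)
  moreover have "(real t2 * (m * real G2) + r2t - r1t) / (m * real G1) = real t1 - e / real G1"
    using rescaled_difference[OF m_pos _ q[unfolded k_eq]] G1_gt_1 by simp
  moreover have "rnd (real t1 - e / real G1) = int t1"
    using e sigma_less_G1 G1_gt_1 by (intro rnd_eqI) (simp_all add: field_simps)
  ultimately show ?thesis by simp
qed

lemma alg2_outputs_decode_lower:
  assumes k: "int t2 * int G2 - int t1 * int G1 = k" "k < 0" "- int G2 < k" and t1: "t1 \<le> n1dd"
    and q: "(r1t - r2t) / m = real_of_int k + e" and e: "- real \<sigma> / 2 \<le> e" "e < real \<sigma> / 2"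
  shows "alg2_outputs m G1 G2 j r1t r2t = {(int t1, int t2)}"
proof -
  have "nat (- k) = t1 * G1 mod G2"
    using nat_mult_diff_eq_mod[of t1 G1 t2 G2] k by simp
  then have kS1: "nat (- k) \<in> S1"
    using t1 unfolding Sset_def by blast
  have k_real: "real (nat (- k)) = - real_of_int k"
    using k(2) by simp
  have k_eq: "real_of_int k = real t2 * real G2 - real t1 * real G1"
    using k(1) by (metis of_int_diff of_int_mult of_int_of_nat_eq)
  have "real \<sigma> \<le> real (nat (- k))"
    using S1_separated[OF kS1 zero_in_Sset] k(2) by simp
  then have "(r1t - r2t) / m < - real \<sigma> / 2" "- real \<sigma> / 2 \<le> (r1t - r2t) / m + real (nat (- k))"
    "(r1t - r2t) / m + real (nat (- k)) < real \<sigma> / 2"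
    using q e k_real sigma_ge_1 by linarith+
  note alg2_outputs_lower[OF this(1) kS1 this(2,3)]
  moreover have "nat (- k) * modinv G1 G2 mod G2 = t1"
    using \<open>nat (- k) = t1 * G1 mod G2\<close> mod_mult_modinv[of G1 G2 t1] coprime G2_gt_1 t1 n1dd_bounds(2)
    by simp
  moreover have "(r2t - r1t) / m = - ((r1t - r2t) / m)"
    by (metis minus_diff_eq minus_divide_left)
  then have "(r2t - r1t) / m = real t1 * real G1 - real t2 * real G2 + - e"
    using q[unfolded k_eq] by linarith
  then have "(real t1 * (m * real G1) + r1t - r2t) / (m * real G2) = real t2 + e / real G2"
    using rescaled_difference[OF m_pos, of "real G2" r2t r1t t1 "real G1" t2 "- e"] G2_gt_1 by simp
  moreover have "rnd (real t2 + e / real G2) = int t2"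
    using e sigma_less_G1 G1_less_G2 by (intro rnd_eqI) (simp_all add: field_simps)
  ultimately show ?thesis by simp
qed

lemma alg2_outputs_decode:
  fixes N r1t r2t :: real
  assumes N: "0 \<le> N" "N < m * real G2 * (1 + real n2dd)" "N < m * real G1 * (1 + real n1dd)"
  defines "n1 \<equiv> \<lfloor>N / (m * real G1)\<rfloor>" and "n2 \<equiv> \<lfloor>N / (m * real G2)\<rfloor>"
  defines "r1 \<equiv> N - real_of_int n1 * (m * real G1)" and "r2 \<equiv> N - real_of_int n2 * (m * real G2)"
  assumes e: "- real \<sigma> / 2 \<le> ((r1t - r1) - (r2t - r2)) / m"
    "((r1t - r1) - (r2t - r2)) / m < real \<sigma> / 2"
  shows "alg2_outputs m G1 G2 j r1t r2t = {(n1, n2)}"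
proof -
  define e where "e = ((r1t - r1) - (r2t - r2)) / m"
  have m12: "0 < m * real G1" "0 < m * real G2"
    using m_pos G1_gt_1 G2_gt_1 by simp_all
  obtain t1 where t1: "n1 = int t1" "t1 \<le> n1dd"
    using floor_div_eq_nat_le[OF m12(1) N(1)] N(3) unfolding n1_def by blast
  obtain t2 where t2: "n2 = int t2" "t2 \<le> n2dd"
    using floor_div_eq_nat_le[OF m12(2) N(1)] N(2) unfolding n2_def by blast
  define k where "k = int t2 * int G2 - int t1 * int G1"
  have "r1 - r2 = m * real_of_int k"
    unfolding r1_def r2_def k_def t1 t2 by (simp add: algebra_simps)
  moreover have "0 \<le> r1" "r1 < m * real G1" "0 \<le> r2" "r2 < m * real G2"
    using floor_remainder_bounds[OF m12(1)] floor_remainder_bounds[OF m12(2)]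
    unfolding r1_def r2_def n1_def n2_def by simp_all
  ultimately have "m * real_of_int k < m * real G1" "m * (- real G2) < m * real_of_int k"
    by linarith+
  then have "real_of_int k < real G1" "- real G2 < real_of_int k"
    using m_pos mult_less_cancel_left_pos by blast+
  then have k_bounds: "k < int G1" "- int G2 < k"
    by linarith+
  have q: "(r1t - r2t) / m = real_of_int k + e"
    using \<open>r1 - r2 = m * real_of_int k\<close> m_pos unfolding e_def by (simp add: field_simps)
  consider "0 < k" | "k < 0" | "k = 0" by linarith
  then show ?thesis
  proof cases
    case 1
    show ?thesis
      using alg2_outputs_decode_upper[OF k_def[symmetric] 1 k_bounds(1) t2(2) q] e
      unfolding t1 t2 e_def by simp
  next
    case 2
    show ?thesis
      using alg2_outputs_decode_lower[OF k_def[symmetric] 2 k_bounds(2) t1(2) q] e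
      unfolding t1 t2 e_def by simp
  next
    case 3
    then have "t2 * G2 = t1 * G1"
      unfolding k_def by (simp flip: of_nat_mult)
    then have "G1 dvd t2"
      using coprime by (metis coprime_dvd_mult_left_iff dvd_triv_right)
    then have "t2 = 0"
      using t2(2) n2dd_bounds(2) by (meson dvd_imp_le le_less_trans less_irrefl not_gr0)
    then have "t1 = 0"
      using \<open>t2 * G2 = t1 * G1\<close> G1_gt_1 by simp
    then show ?thesis
      using alg2_outputs_middle[of r1t r2t] q e 3 \<open>t2 = 0\<close> unfolding t1 t2 e_def by simp
  qed
qed

lemma alg2_outputs_miss_at_bound:
  fixes X :: real
  defines "X \<equiv> min (m * real G2 * (1 + real n2dd)) (m * real G1 * (1 + real n1dd))"
  defines "n1 \<equiv> \<lfloor>X / (m * real G1)\<rfloor>" and "n2 \<equiv> \<lfloor>X / (m * real G2)\<rfloor>"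
  defines "r1 \<equiv> X - real_of_int n1 * (m * real G1)" and "r2 \<equiv> X - real_of_int n2 * (m * real G2)"
  shows "(n1, n2) \<notin> alg2_outputs m G1 G2 j r1 r2"
proof
  assume out: "(n1, n2) \<in> alg2_outputs m G1 G2 j r1 r2"
  have m12: "0 < m * real G1" "0 < m * real G2"
    using m_pos G1_gt_1 G2_gt_1 by simp_all
  have r_pos: "0 \<le> r1" "0 \<le> r2"
    using floor_remainder_bounds(1)[OF m12(1)] floor_remainder_bounds(1)[OF m12(2)]
    unfolding r1_def r2_def n1_def n2_def by simp_all
  show False
  proof (cases "X = m * real G2 * (1 + real n2dd)")
    case True
    then have "n2 = 1 + int n2dd"
      unfolding n2_def using m_pos G2_gt_1 by simp
    then have "r2 = 0"
      unfolding r2_def True by simp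
    then have "0 \<le> (r1 - r2) / m"
      using r_pos m_pos by simp
    then have "- real \<sigma> / 2 \<le> (r1 - r2) / m"
      by linarith
    then show False
      using alg2_outputs_snd_le[OF _ out] \<open>n2 = 1 + int n2dd\<close> by simp
  next
    case False
    then have X: "X = m * real G1 * (1 + real n1dd)"
      unfolding X_def by linarith
    then have "n1 = 1 + int n1dd"
      unfolding n1_def using m_pos G1_gt_1 by simp
    then have "r1 = 0"
      unfolding r1_def X by simp
    then have "(r1 - r2) / m \<le> 0"
      using r_pos m_pos by (simp add: divide_nonpos_pos)
    then have "(r1 - r2) / m < real \<sigma> / 2"
      using sigma_ge_1 by linarith
    then show False
      using alg2_outputs_fst_le[OF _ out] \<open>n1 = 1 + int n1dd\<close> by simp
  qed
qed

end

theorem theorem4: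
  fixes m :: real and G1 G2 j :: nat
  assumes m_pos: "m > 0"
    and cop: "coprime G1 G2"
    and G1_gt: "1 < G1" and G12: "G1 < G2"
    and j_ge: "1 \<le> j" and j_le: "j \<le> Kidx G1 G2 + 1"
  defines "X \<equiv> min (m * real G2 * (1 + real (nddot G2 G1 (sigma G1 G2 j))))
                     (m * real G1 * (1 + real (nddot G1 G2 (sigma G1 G2 j))))"
  shows
    "(\<forall>N r1t r2t. 0 \<le> N \<and> N < X \<longrightarrow>
        0 \<le> r1t \<and> r1t < m * real G1 \<longrightarrow> 0 \<le> r2t \<and> r2t < m * real G2 \<longrightarrow>
        (let n1 = \<lfloor>N / (m * real G1)\<rfloor>; n2 = \<lfloor>N / (m * real G2)\<rfloor>;
             r1 = N - real_of_int n1 * (m * real G1); r2 = N - real_of_int n2 * (m * real G2)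
         in - real (sigma G1 G2 j) / 2 \<le> ((r1t - r1) - (r2t - r2)) / m \<and>
            ((r1t - r1) - (r2t - r2)) / m < real (sigma G1 G2 j) / 2 \<longrightarrow>
            alg2_outputs m G1 G2 j r1t r2t = {(n1, n2)}))
   \<and> (\<forall>N r1t r2t \<tau>. 0 \<le> N \<and> N < X \<longrightarrow>
        0 \<le> r1t \<and> r1t < m * real G1 \<longrightarrow> 0 \<le> r2t \<and> r2t < m * real G2 \<longrightarrow>
        \<tau> < m * real (sigma G1 G2 j) / 4 \<longrightarrow>
        (let n1 = \<lfloor>N / (m * real G1)\<rfloor>; n2 = \<lfloor>N / (m * real G2)\<rfloor>;
             r1 = N - real_of_int n1 * (m * real G1); r2 = N - real_of_int n2 * (m * real G2)
         in \<bar>r1t - r1\<bar> \<le> \<tau> \<and> \<bar>r2t - r2\<bar> \<le> \<tau> \<longrightarrow>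
            alg2_outputs m G1 G2 j r1t r2t = {(n1, n2)}))
   \<and> (let N = X; n1 = \<lfloor>N / (m * real G1)\<rfloor>; n2 = \<lfloor>N / (m * real G2)\<rfloor>;
           r1 = N - real_of_int n1 * (m * real G1); r2 = N - real_of_int n2 * (m * real G2)
       in \<exists>r1t r2t. 0 \<le> r1t \<and> r1t < m * real G1 \<and> 0 \<le> r2t \<and> r2t < m * real G2 \<and>
            - real (sigma G1 G2 j) / 2 \<le> ((r1t - r1) - (r2t - r2)) / m \<and>
            ((r1t - r1) - (r2t - r2)) / m < real (sigma G1 G2 j) / 2 \<and>
            alg2_outputs m G1 G2 j r1t r2t \<noteq> {} \<and>
            (n1, n2) \<notin> alg2_outputs m G1 G2 j r1t r2t)"
proof -
  interpret two_moduli m G1 G2 j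
    using m_pos cop G1_gt G12 j_ge j_le by unfold_locales
  let ?r1 = "\<lambda>N. N - real_of_int \<lfloor>N / (m * real G1)\<rfloor> * (m * real G1)"
  let ?r2 = "\<lambda>N. N - real_of_int \<lfloor>N / (m * real G2)\<rfloor> * (m * real G2)"
  have decode: "alg2_outputs m G1 G2 j r1t r2t = {(\<lfloor>N / (m * real G1)\<rfloor>, \<lfloor>N / (m * real G2)\<rfloor>)}"
    if "0 \<le> N" "N < X" "- real \<sigma> / 2 \<le> ((r1t - ?r1 N) - (r2t - ?r2 N)) / m"
      "((r1t - ?r1 N) - (r2t - ?r2 N)) / m < real \<sigma> / 2" for N r1t r2t
    using alg2_outputs_decode[of N r1t r2t] that unfolding X_def by simp
  have decode_bounded: "alg2_outputs m G1 G2 j r1t r2t = {(\<lfloor>N / (m * real G1)\<rfloor>, \<lfloor>N / (m * real G2)\<rfloor>)}"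
    if "0 \<le> N" "N < X" "\<tau> < m * real \<sigma> / 4" "\<bar>r1t - ?r1 N\<bar> \<le> \<tau>" "\<bar>r2t - ?r2 N\<bar> \<le> \<tau>"
    for N r1t r2t \<tau>
    using decode[OF that(1,2) diff_div_in_window[OF m_pos that(4,5,3)]] .
  have sharp: "\<exists>r1t r2t. 0 \<le> r1t \<and> r1t < m * real G1 \<and> 0 \<le> r2t \<and> r2t < m * real G2 \<and>
      - real \<sigma> / 2 \<le> ((r1t - ?r1 X) - (r2t - ?r2 X)) / m \<and>
      ((r1t - ?r1 X) - (r2t - ?r2 X)) / m < real \<sigma> / 2 \<and>
      alg2_outputs m G1 G2 j r1t r2t \<noteq> {} \<and>
      (\<lfloor>X / (m * real G1)\<rfloor>, \<lfloor>X / (m * real G2)\<rfloor>) \<notin> alg2_outputs m G1 G2 j r1t r2t"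
  proof (intro exI conjI)
    show "0 \<le> ?r1 X" "?r1 X < m * real G1" "0 \<le> ?r2 X" "?r2 X < m * real G2"
      using floor_remainder_bounds m_pos G1_gt_1 G2_gt_1 by simp_all
    show "(\<lfloor>X / (m * real G1)\<rfloor>, \<lfloor>X / (m * real G2)\<rfloor>) \<notin> alg2_outputs m G1 G2 j (?r1 X) (?r2 X)"
      using alg2_outputs_miss_at_bound unfolding X_def .
  qed (use sigma_ge_1 alg2_outputs_nonempty in simp_all)
  show ?thesis
    unfolding Let_def using decode decode_bounded sharp by blast
qed

end
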